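(* Let $G=(V,E)$ be a graph with a partition $(A,B)$ of its vertex set. Let $G_1=(V,E_1)$ with $E_1=E\cup\{\{a,b\}: a,b\in B,\ a\neq b\}$. Then $\mathrm{box}(G_1)\le 2\,\mathrm{box}(G)$.
   Context: An interval graph is the intersection graph of a finite family of intervals of the real line. A box representation of dimension $k$ of $G=(V,E)$ is a family of $k$ interval graphs $I_1,\dots,I_k$ on vertex set $V$ with $E=E(I_1)\cap\cdots\cap E(I_k)$; the boxicity $\mathrm{box}(G)$ is the minimum such $k$. *)

theory Defs
  imports Complex_Main
begin

definition graph :: "'a set \<Rightarrow> ('a \<times> 'a) set \<Rightarrow> bool" where
  "graph V E \<longleftrightarrow> E \<subseteq> V \<times> V \<and> sym E \<and> (\<forall>v. (v, v) \<notin> E)"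

definition interval_edges :: "'a set \<Rightarrow> ('a \<Rightarrow> real) \<Rightarrow> ('a \<Rightarrow> real) \<Rightarrow> ('a \<times> 'a) set" where
  "interval_edges V l r =
     {(u, v). u \<in> V \<and> v \<in> V \<and> u \<noteq> v \<and> {l u..r u} \<inter> {l v..r v} \<noteq> {}}"

definition is_interval_graph :: "'a set \<Rightarrow> ('a \<times> 'a) set \<Rightarrow> bool" where
  "is_interval_graph V F \<longleftrightarrow>
     (\<exists>l r. (\<forall>v\<in>V. l v \<le> r v) \<and> F = interval_edges V l r)"

text \<open>A box representation of dimension k: k interval graphs I_0..I_{k-1} on V whose
edge sets intersect to E (the empty intersection being the complete graph on V).\<close>
definition box_rep :: "'a set \<Rightarrow> ('a \<times> 'a) set \<Rightarrow> nat \<Rightarrow> bool" where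
  "box_rep V E k \<longleftrightarrow>
     (\<exists>I :: nat \<Rightarrow> ('a \<times> 'a) set.
        (\<forall>i<k. is_interval_graph V (I i)) \<and>
        E = {(u, v). u \<in> V \<and> v \<in> V \<and> u \<noteq> v \<and> (\<forall>i<k. (u, v) \<in> I i)})"

definition boxicity :: "'a set \<Rightarrow> ('a \<times> 'a) set \<Rightarrow> nat" where
  "boxicity V E = (LEAST k. box_rep V E k)"

end

theory Submission
  imports Defs
begin

text \<open>Each interval representation of G is split into two: in the first the intervals of
vertices in B are stretched down to a common left end, in the second up to a common right end.
Two vertices of B then meet in both, while any other pair meets in both exactly when their
original intervals meet. Doing this in every coordinate of a k-dimensional box representation
of G gives a 2k-dimensional one of G with B made a clique.\<close>

lemma interval_inter_nonempty_iff:
  "{a..b::real} \<inter> {c..d} \<noteq> {} \<longleftrightarrow> a \<le> b \<and> c \<le> d \<and> a \<le> d \<and> c \<le> b"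
proof
  assume "a \<le> b \<and> c \<le> d \<and> a \<le> d \<and> c \<le> b"
  then have "max a c \<in> {a..b} \<inter> {c..d}" by auto
  then show "{a..b} \<inter> {c..d} \<noteq> {}" by blast
qed auto

lemma stretched_intervals_intersect_iff:
  fixes m M lu ru lv rv :: real
  assumes "m \<le> lu" "lu \<le> ru" "ru \<le> M" "m \<le> lv" "lv \<le> rv" "rv \<le> M"
  shows "({if bu then m else lu..ru} \<inter> {if bv then m else lv..rv} \<noteq> {} \<and>
          {lu..if bu then M else ru} \<inter> {lv..if bv then M else rv} \<noteq> {})
     \<longleftrightarrow> (bu \<and> bv) \<or> {lu..ru} \<inter> {lv..rv} \<noteq> {}"
  using assms unfolding interval_inter_nonempty_iff by (cases bu; cases bv) auto

lemma interval_graph_add_clique_split: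
  assumes "finite V" and "is_interval_graph V F"
  obtains F\<^sub>1 F\<^sub>2 where "is_interval_graph V F\<^sub>1" and "is_interval_graph V F\<^sub>2"
    and "\<And>u v. u \<in> V \<Longrightarrow> v \<in> V \<Longrightarrow> u \<noteq> v \<Longrightarrow>
           (u, v) \<in> F\<^sub>1 \<and> (u, v) \<in> F\<^sub>2 \<longleftrightarrow> (u \<in> B \<and> v \<in> B) \<or> (u, v) \<in> F"
proof -
  obtain l r where lr: "\<And>v. v \<in> V \<Longrightarrow> l v \<le> r v" and F: "F = interval_edges V l r"
    using assms(2) unfolding is_interval_graph_def by blast
  define m where "m = Min (l ` V)"
  define M where "M = Max (r ` V)"
  have m: "m \<le> l v" and M: "r v \<le> M" if "v \<in> V" for v
    using that assms(1) unfolding m_def M_def by simp_all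
  define l' where "l' v = (if v \<in> B then m else l v)" for v
  define r' where "r' v = (if v \<in> B then M else r v)" for v
  have "\<forall>v\<in>V. l' v \<le> r v" and "\<forall>v\<in>V. l v \<le> r' v"
    unfolding l'_def r'_def using lr m M by (auto intro: order_trans)
  then have "is_interval_graph V (interval_edges V l' r)" and "is_interval_graph V (interval_edges V l r')"
    unfolding is_interval_graph_def by blast+
  moreover have "(u, v) \<in> interval_edges V l' r \<and> (u, v) \<in> interval_edges V l r'
      \<longleftrightarrow> (u \<in> B \<and> v \<in> B) \<or> (u, v) \<in> F"
    if "u \<in> V" "v \<in> V" "u \<noteq> v" for u v
    unfolding F interval_edges_def l'_def r'_def
    using that stretched_intervals_intersect_iff[OF m lr M m lr M, of u v "u \<in> B" "v \<in> B"]
    by simp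
  ultimately show ?thesis using that by blast
qed

lemma all_less_double_iff: "(\<forall>j < 2 * (k::nat). P j) \<longleftrightarrow> (\<forall>i < k. P i \<and> P (i + k))"
proof safe
  fix j assume "\<forall>i < k. P i \<and> P (i + k)" and "j < 2 * k"
  then show "P j"
    by (cases "j < k") (auto dest: spec[of _ "j - k"])
qed auto

lemma box_rep_add_clique:
  assumes "finite V" and "B \<subseteq> V" and "box_rep V E k"
  shows "box_rep V (E \<union> {(a, b). a \<in> B \<and> b \<in> B \<and> a \<noteq> b}) (2 * k)"
proof -
  obtain I where I: "\<And>i. i < k \<Longrightarrow> is_interval_graph V (I i)"
    and E: "E = {(u, v). u \<in> V \<and> v \<in> V \<and> u \<noteq> v \<and> (\<forall>i<k. (u, v) \<in> I i)}"
    using assms(3) unfolding box_rep_def by blast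
  have "\<forall>i. \<exists>F\<^sub>1 F\<^sub>2. i < k \<longrightarrow> is_interval_graph V F\<^sub>1 \<and> is_interval_graph V F\<^sub>2 \<and>
          (\<forall>u\<in>V. \<forall>v\<in>V. u \<noteq> v \<longrightarrow>
             ((u, v) \<in> F\<^sub>1 \<and> (u, v) \<in> F\<^sub>2 \<longleftrightarrow> (u \<in> B \<and> v \<in> B) \<or> (u, v) \<in> I i))"
    by (metis interval_graph_add_clique_split[OF assms(1) I])
  then obtain F\<^sub>1 F\<^sub>2 where F: "\<And>i. i < k \<Longrightarrow> is_interval_graph V (F\<^sub>1 i) \<and> is_interval_graph V (F\<^sub>2 i)"
    and F_edges: "\<And>i u v. i < k \<Longrightarrow> u \<in> V \<Longrightarrow> v \<in> V \<Longrightarrow> u \<noteq> v \<Longrightarrow>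
          (u, v) \<in> F\<^sub>1 i \<and> (u, v) \<in> F\<^sub>2 i \<longleftrightarrow> (u \<in> B \<and> v \<in> B) \<or> (u, v) \<in> I i"
    by metis
  define J where "J j = (if j < k then F\<^sub>1 j else F\<^sub>2 (j - k))" for j
  have J: "is_interval_graph V (J j)" if "j < 2 * k" for j
    using that F[of j] F[of "j - k"] unfolding J_def by auto
  have "(\<forall>j < 2 * k. (u, v) \<in> J j) \<longleftrightarrow> (\<forall>i < k. (u \<in> B \<and> v \<in> B) \<or> (u, v) \<in> I i)"
    if "u \<in> V" "v \<in> V" "u \<noteq> v" for u v
    unfolding all_less_double_iff J_def using F_edges[OF _ that] by simp
  then have "E \<union> {(a, b). a \<in> B \<and> b \<in> B \<and> a \<noteq> b}
      = {(u, v). u \<in> V \<and> v \<in> V \<and> u \<noteq> v \<and> (\<forall>j < 2 * k. (u, v) \<in> J j)}"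
    using assms(2) unfolding E by auto
  with J show ?thesis
    unfolding box_rep_def by blast
qed

text \<open>Coordinate x of the representation separates x from its non-neighbours: x gets the
point 0, its neighbours [0, 1], all other vertices the point 1.\<close>
lemma box_rep_exists:
  assumes "finite V" and "graph V E"
  shows "\<exists>k. box_rep V E k"
proof -
  obtain f and n :: nat where V: "V = f ` {i. i < n}"
    using finite_imp_nat_seg_image_inj_on[OF assms(1)] by blast
  define l where "l x v = (if v = x \<or> (x, v) \<in> E then 0 else 1 :: real)" for x v :: 'a
  define r where "r x v = (if v = x then 0 else 1 :: real)" for x v :: 'a
  define I where "I i = interval_edges V (l (f i)) (r (f i))" for i
  have I_iff: "(u, v) \<in> interval_edges V (l x) (r x) \<longleftrightarrow>
      u \<in> V \<and> v \<in> V \<and> u \<noteq> v \<and> (u = x \<longrightarrow> (x, v) \<in> E) \<and> (v = x \<longrightarrow> (x, u) \<in> E)" for x u v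
    unfolding interval_edges_def interval_inter_nonempty_iff l_def r_def by auto
  have "\<forall>v\<in>V. l x v \<le> r x v" for x
    unfolding l_def r_def by auto
  then have "\<forall>i<n. is_interval_graph V (I i)"
    unfolding is_interval_graph_def I_def by blast
  moreover have "E = {(u, v). u \<in> V \<and> v \<in> V \<and> u \<noteq> v \<and> (\<forall>i<n. (u, v) \<in> I i)}"
    using assms(2) V unfolding I_def I_iff graph_def sym_def by blast
  ultimately show ?thesis unfolding box_rep_def by blast
qed

lemma box_rep_boxicity:
  assumes "finite V" and "graph V E"
  shows "box_rep V E (boxicity V E)"
  unfolding boxicity_def using box_rep_exists[OF assms] by (rule LeastI_ex)

theorem lemma5:
  fixes V A B :: "'a set" and E :: "('a \<times> 'a) set"
  assumes "finite V" and "graph V E"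
    and "A \<union> B = V" and "A \<inter> B = {}"
  shows "boxicity V (E \<union> {(a, b). a \<in> B \<and> b \<in> B \<and> a \<noteq> b}) \<le> 2 * boxicity V E"
proof -
  have "B \<subseteq> V" using assms(3) by blast
  then have "box_rep V (E \<union> {(a, b). a \<in> B \<and> b \<in> B \<and> a \<noteq> b}) (2 * boxicity V E)"
    using box_rep_add_clique box_rep_boxicity assms(1,2) by blast
  then show ?thesis unfolding boxicity_def by (rule Least_le)
qed

end
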